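(* Given any Boolean multi-function $f$, there are Boolean functions $g_0$ and $g_1$ such that $f=\diamond(g_0,g_1)$.
   Context: Let $\mathbf{2}=\{0,1\}$. An $n$-ary Boolean multi-function is a map $f:\mathbf{2}^n\to \wp(\mathbf{2})\setminus \emptyset=\{\{0\},\{1\},\{0,1\}\}$; a Boolean function is the special case where every output is a singleton. The platypus connective, written here $\diamond$, is the binary Boolean multi-function $\diamond(x,y)=\{x\land y,x\lor y\}$. Composition of multi-functions is taken in either of the following senses (which coincide when the inner maps are functions): $f(g_1(\vec{x}_1),\ldots,g_n(\vec{x}_n))=\bigcup\{f(\vec{y}):\vec{y}\in \prod_{1\leq i\leq n}g_i(\vec{x}_i)\}$, or the same union restricted to $\vec y$ with $y_i=y_j$ whenever $g_i(\vec{x}_i)=g_j(\vec{x}_j)$. *)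

theory Defs
  imports Main
begin

text \<open>Booleans 2 = {0,1} are modelled by the type bool (False = 0, True = 1);
  the domain 2^n is modelled as bool lists of length n.\<close>

definition bool_multifun :: "nat \<Rightarrow> (bool list \<Rightarrow> bool set) \<Rightarrow> bool" where
  "bool_multifun n f \<longleftrightarrow> (\<forall>xs. length xs = n \<longrightarrow> f xs \<noteq> {})"

definition platypus :: "bool \<Rightarrow> bool \<Rightarrow> bool set" where
  "platypus x y = {x \<and> y, x \<or> y}"

definition comp2 :: "(bool \<Rightarrow> bool \<Rightarrow> bool set) \<Rightarrow> (bool list \<Rightarrow> bool)
    \<Rightarrow> (bool list \<Rightarrow> bool) \<Rightarrow> bool list \<Rightarrow> bool set" where
  "comp2 F g0 g1 xs = \<Union>{F y0 y1 | y0 y1. y0 \<in> {g0 xs} \<and> y1 \<in> {g1 xs}}"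

end

theory Submission
  imports Defs
begin

text \<open>With False below True, \<open>platypus x y\<close> is the set of the minimum and the maximum of
  \<open>x\<close> and \<open>y\<close>, and a nonempty set of Booleans consists exactly of its least and its greatest
  element, namely \<open>False \<notin> S\<close> and \<open>True \<in> S\<close>. So \<open>g\<^sub>0\<close> and \<open>g\<^sub>1\<close> pick the least and the
  greatest value of \<open>f\<close>.\<close>

lemma comp2_platypus: "comp2 platypus g0 g1 xs = platypus (g0 xs) (g1 xs)"
  unfolding comp2_def by auto

lemma platypus_least_greatest:
  assumes "S \<noteq> {}"
  shows "platypus (False \<notin> S) (True \<in> S) = S"
proof -
  have "S \<in> {{False}, {True}, {False, True}}"
    using assms Pow_UNIV[where 'a=bool] by (auto simp: UNIV_bool Pow_insert)
  then show ?thesis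
    unfolding platypus_def by auto
qed

theorem proposition1:
  fixes n :: nat and f :: "bool list \<Rightarrow> bool set"
  assumes "bool_multifun n f"
  shows "\<exists>g0 g1 :: bool list \<Rightarrow> bool.
           \<forall>xs. length xs = n \<longrightarrow> f xs = comp2 platypus g0 g1 xs"
proof (intro exI allI impI)
  fix xs :: "bool list"
  assume "length xs = n"
  with assms have "f xs \<noteq> {}"
    unfolding bool_multifun_def by blast
  then show "f xs = comp2 platypus (\<lambda>xs. False \<notin> f xs) (\<lambda>xs. True \<in> f xs) xs"
    unfolding comp2_platypus by (simp add: platypus_least_greatest)
qed

end
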